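(* For a set of reals $X$: (1) $X$ satisfies $\mathrm{Split}(C_\Omega,C_\Lambda)$ if and only if no image $f[X]$ of $X$ under a continuous function $f:X\to[\mathbb N]^\infty$ is a base for a nonprincipal ultrafilter on $\mathbb N$. (2) $X$ satisfies $\mathrm{Split}(B_\Omega,B_\Lambda)$ if and only if no image $f[X]$ of $X$ under a Borel function $f:X\to[\mathbb N]^\infty$ is a base for a nonprincipal ultrafilter on $\mathbb N$. (3) $X$ satisfies $\mathrm{Split}(C_{\mathrm T},C_{\mathrm T})$ if and only if no image of $X$ under a continuous function $f:X\to[\mathbb N]^\infty$ is a simple $P$-point base. (4) $X$ satisfies $\mathrm{Split}(B_{\mathrm T},B_{\mathrm T})$ if and only if no image of $X$ under a Borel function $f:X\to[\mathbb N]^\infty$ is a simple $P$-point base.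
   Context: A set of reals is an infinite topological space homeomorphic to a subset of $\mathbb R$. A cover of a space $X$ is a family $\mathcal U$ of subsets of $X$ with $\bigcup\mathcal U=X$ such that $X\not\subseteq U$ for every $U\in\mathcal U$. A cover $\mathcal U$ is: a large cover if every $x\in X$ lies in infinitely many members; an $\omega$-cover if every finite subset of $X$ is contained in some member; a $\tau$-cover if it is a large cover and for all $x,y\in X$ at least one of $\{U\in\mathcal U: x\in U, y\notin U\}$, $\{U\in\mathcal U: y\in U, x\notin U\}$ is finite. $B_\Lambda,B_\Omega,B_{\mathrm T}$ denote the collections of countable large covers, $\omega$-covers, $\tau$-covers of $X$ by Borel sets, and $C_\Lambda,C_\Omega,C_{\mathrm T}$ the corresponding collections of countable covers by clopen sets. For collections $\mathfrak U,\mathfrak V$ of covers, $X$ satisfies $\mathrm{Split}(\mathfrak U,\mathfrak V)$ if every $\mathcal U\in\mathfrak U$ can be partitioned into two disjoint subfamilies each of which contains a subfamily belonging to $\mathfrak V$. $[\mathbb N]^\infty$ is the set of infinite subsets of $\mathbb N$, a subspace of $P(\mathbb N)$ identified with the Cantor space $\{0,1\}^{\mathbb N}$ via characteristic functions. For $a,b\subseteq\mathbb N$, $a\subseteq^* b$ means $a\setminus b$ is finite. A family $B\subseteq[\mathbb N]^\infty$ is a base for a nonprincipal ultrafilter $U$ on $\mathbb N$ if $U=\{a\in[\mathbb N]^\infty:\exists b\in B\ (b\subseteq^* a)\}$. A simple $P$-point base is a family $B\subseteq[\mathbb N]^\infty$ which is a base for some nonprincipal ultrafilter on $\mathbb N$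 and is linearly ordered by $\subseteq^*$. *)

theory Defs
  imports "HOL-Analysis.Analysis" "HOL-Probability.Probability"
begin

definition is_cover :: "'a set \<Rightarrow> 'a set set \<Rightarrow> bool" where
  "is_cover X \<U> \<longleftrightarrow> (\<forall>U\<in>\<U>. U \<subseteq> X) \<and> \<Union>\<U> = X \<and> (\<forall>U\<in>\<U>. \<not> X \<subseteq> U)"

definition large_cover :: "'a set \<Rightarrow> 'a set set \<Rightarrow> bool" where
  "large_cover X \<U> \<longleftrightarrow> is_cover X \<U> \<and> (\<forall>x\<in>X. infinite {U\<in>\<U>. x \<in> U})"

definition omega_cover :: "'a set \<Rightarrow> 'a set set \<Rightarrow> bool" where
  "omega_cover X \<U> \<longleftrightarrow> is_cover X \<U> \<and> (\<forall>F. finite F \<and> F \<subseteq> X \<longrightarrow> (\<exists>U\<in>\<U>. F \<subseteq> U))"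

definition tau_cover :: "'a set \<Rightarrow> 'a set set \<Rightarrow> bool" where
  "tau_cover X \<U> \<longleftrightarrow> large_cover X \<U> \<and>
     (\<forall>x\<in>X. \<forall>y\<in>X. finite {U\<in>\<U>. x \<in> U \<and> y \<notin> U} \<or> finite {U\<in>\<U>. y \<in> U \<and> x \<notin> U})"

definition clopen_in :: "real set \<Rightarrow> real set \<Rightarrow> bool" where
  "clopen_in X U \<longleftrightarrow> openin (top_of_set X) U \<and> closedin (top_of_set X) U"

definition borel_in :: "real set \<Rightarrow> real set \<Rightarrow> bool" where
  "borel_in X U \<longleftrightarrow> U \<in> sets (restrict_space borel X)"

definition C_Lambda :: "real set \<Rightarrow> real set set set" where
  "C_Lambda X = {\<U>. countable \<U> \<and> large_cover X \<U> \<and> (\<forall>U\<in>\<U>. clopen_in X U)}"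
definition C_Omega :: "real set \<Rightarrow> real set set set" where
  "C_Omega X = {\<U>. countable \<U> \<and> omega_cover X \<U> \<and> (\<forall>U\<in>\<U>. clopen_in X U)}"
definition C_Tau :: "real set \<Rightarrow> real set set set" where
  "C_Tau X = {\<U>. countable \<U> \<and> tau_cover X \<U> \<and> (\<forall>U\<in>\<U>. clopen_in X U)}"
definition B_Lambda :: "real set \<Rightarrow> real set set set" where
  "B_Lambda X = {\<U>. countable \<U> \<and> large_cover X \<U> \<and> (\<forall>U\<in>\<U>. borel_in X U)}"
definition B_Omega :: "real set \<Rightarrow> real set set set" where
  "B_Omega X = {\<U>. countable \<U> \<and> omega_cover X \<U> \<and> (\<forall>U\<in>\<U>. borel_in X U)}"
definition B_Tau :: "real set \<Rightarrow> real set set set" where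
  "B_Tau X = {\<U>. countable \<U> \<and> tau_cover X \<U> \<and> (\<forall>U\<in>\<U>. borel_in X U)}"

definition Split :: "'a set set set \<Rightarrow> 'a set set set \<Rightarrow> bool" where
  "Split \<UU> \<VV> \<longleftrightarrow> (\<forall>\<U>\<in>\<UU>. \<exists>\<V>1 \<V>2. \<V>1 \<union> \<V>2 = \<U> \<and> \<V>1 \<inter> \<V>2 = {} \<and>
      (\<exists>\<W>\<subseteq>\<V>1. \<W> \<in> \<VV>) \<and> (\<exists>\<W>\<subseteq>\<V>2. \<W> \<in> \<VV>))"

definition almost_subset :: "nat set \<Rightarrow> nat set \<Rightarrow> bool" (infix "\<subseteq>\<^sup>*" 50) where
  "a \<subseteq>\<^sup>* b \<longleftrightarrow> finite (a - b)"

definition nonprincipal_ultrafilter :: "nat set set \<Rightarrow> bool" where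
  "nonprincipal_ultrafilter U \<longleftrightarrow>
     UNIV \<in> U \<and> {} \<notin> U \<and>
     (\<forall>a b. a \<in> U \<and> a \<subseteq> b \<longrightarrow> b \<in> U) \<and>
     (\<forall>a b. a \<in> U \<and> b \<in> U \<longrightarrow> a \<inter> b \<in> U) \<and>
     (\<forall>a. a \<in> U \<or> - a \<in> U) \<and>
     (\<forall>n. {n} \<notin> U)"

definition ultrafilter_base :: "nat set set \<Rightarrow> bool" where
  "ultrafilter_base B \<longleftrightarrow> (\<forall>b\<in>B. infinite b) \<and>
     (\<exists>U. nonprincipal_ultrafilter U \<and> U = {a. infinite a \<and> (\<exists>b\<in>B. b \<subseteq>\<^sup>* a)})"

definition simple_P_point_base :: "nat set set \<Rightarrow> bool" where
  "simple_P_point_base B \<longleftrightarrow> ultrafilter_base B \<and> (\<forall>a\<in>B. \<forall>b\<in>B. a \<subseteq>\<^sup>* b \<or> b \<subseteq>\<^sup>* a)"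

section \<open>Maps into [N]^infinity, viewed inside the Cantor space {0,1}^N via characteristic functions\<close>

definition continuous_to_inf :: "real set \<Rightarrow> (real \<Rightarrow> nat set) \<Rightarrow> bool" where
  "continuous_to_inf X f \<longleftrightarrow> (\<forall>x\<in>X. infinite (f x)) \<and>
     continuous_map (top_of_set X) (product_topology (\<lambda>_::nat. discrete_topology (UNIV::bool set)) UNIV)
       (\<lambda>x n. n \<in> f x)"

definition borel_to_inf :: "real set \<Rightarrow> (real \<Rightarrow> nat set) \<Rightarrow> bool" where
  "borel_to_inf X f \<longleftrightarrow> (\<forall>x\<in>X. infinite (f x)) \<and>
     (\<lambda>x n. n \<in> f x) \<in> measurable (restrict_space borel X) (Pi\<^sub>M (UNIV::nat set) (\<lambda>_. count_space (UNIV::bool set)))"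

end

theory Submission
  imports Defs
begin

(* A countable cover {U_n} of X is the same thing as the map x \<mapsto> {n. x \<in> U_n} into P(\<nat>),
   and a map f gives back the cover by the sets {x. n \<in> f x}; clopen members correspond to
   continuous maps, Borel members to Borel maps. A splitting of the cover into two large
   subcovers is an index set A that every f x meets in infinitely many points and whose
   complement every f x also meets in infinitely many points. So an \<omega>-cover (whose finite
   intersections f x\<^sub>1 \<inter> ... \<inter> f x\<^sub>k are infinite) cannot be split exactly when every A or its
   complement almost contains some f x, i.e. when f[X] is a base of a nonprincipal
   ultrafilter. Under the same dictionary \<tau>-covers are the covers with \<subseteq>\<^sup>*-linearly ordered
   image f[X]. *)

section \<open>Large, \<omega>- and \<tau>-covers\<close>

lemma large_coverD:
  "large_cover X \<V> \<Longrightarrow> x \<in> X \<Longrightarrow> infinite {U\<in>\<V>. x \<in> U}"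
  unfolding large_cover_def by blast

lemma large_cover_subfamily:
  assumes "is_cover X \<U>" "\<V> \<subseteq> \<U>" "\<And>x. x \<in> X \<Longrightarrow> infinite {U\<in>\<V>. x \<in> U}"
  shows "large_cover X \<V>"
proof -
  have "x \<in> \<Union>\<V>" if "x \<in> X" for x
    using not_finite_existsD[OF assms(3)[OF that]] by blast
  moreover have "U \<subseteq> X" "\<not> X \<subseteq> U" if "U \<in> \<V>" for U
    using assms(1,2) that unfolding is_cover_def by auto
  ultimately have "is_cover X \<V>"
    unfolding is_cover_def by auto
  then show ?thesis
    using assms(3) unfolding large_cover_def by simp
qed

lemma large_cover_mono:
  assumes "is_cover X \<U>" "\<W> \<subseteq> \<V>" "\<V> \<subseteq> \<U>" "large_cover X \<W>"
  shows "large_cover X \<V>"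
proof (rule large_cover_subfamily[OF assms(1,3)])
  fix x assume "x \<in> X"
  with assms(4) have "infinite {U\<in>\<W>. x \<in> U}"
    by (rule large_coverD)
  then show "infinite {U\<in>\<V>. x \<in> U}"
    by (rule infinite_super[rotated]) (use assms(2) in blast)
qed

lemma is_cover_memberD:
  assumes "is_cover X \<U>" "U \<in> \<U>"
  shows "U \<subseteq> X" "\<exists>y\<in>X. y \<notin> U"
proof -
  have cover: "(\<forall>U\<in>\<U>. U \<subseteq> X) \<and> \<Union>\<U> = X \<and> (\<forall>U\<in>\<U>. \<not> X \<subseteq> U)"
    using assms(1) unfolding is_cover_def .
  show "U \<subseteq> X"
    using cover assms(2) by (elim conjE) blast
  show "\<exists>y\<in>X. y \<notin> U"
    using cover assms(2) by (elim conjE) blast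
qed

lemma omega_cover_infinite:
  assumes "omega_cover X \<U>" "finite F" "F \<subseteq> X"
  shows "infinite {U\<in>\<U>. F \<subseteq> U}"
proof
  let ?\<S> = "{U\<in>\<U>. F \<subseteq> U}"
  assume "finite ?\<S>"
  have cover: "is_cover X \<U>"
    and omega: "\<And>G. finite G \<Longrightarrow> G \<subseteq> X \<Longrightarrow> \<exists>U\<in>\<U>. G \<subseteq> U"
    using assms(1) unfolding omega_cover_def by auto
  have "\<forall>U\<in>?\<S>. \<exists>y. y \<in> X \<and> y \<notin> U"
    using is_cover_memberD(2)[OF cover] by blast
  then obtain g where g: "\<forall>U\<in>?\<S>. g U \<in> X \<and> g U \<notin> U"
    by (rule bchoice[THEN exE])
  have "finite (F \<union> g ` ?\<S>)"
    using \<open>finite ?\<S>\<close> assms(2) by simp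
  moreover have "F \<union> g ` ?\<S> \<subseteq> X"
    using g assms(3) by auto
  ultimately obtain U where U: "U \<in> \<U>" "F \<union> g ` ?\<S> \<subseteq> U"
    using omega by blast
  then have "U \<in> ?\<S>"
    by simp
  with g U(2) show False
    by auto
qed

lemma tau_coverD:
  assumes "tau_cover X \<U>" "x \<in> X" "y \<in> X"
  shows "finite {U\<in>\<U>. x \<in> U \<and> y \<notin> U} \<or> finite {U\<in>\<U>. y \<in> U \<and> x \<notin> U}"
  using assms unfolding tau_cover_def by blast

lemma tau_cover_exists_minimal:
  assumes "tau_cover X \<U>" "finite F" "F \<noteq> {}" "F \<subseteq> X"
  shows "\<exists>y\<in>F. \<forall>x\<in>F. finite {U\<in>\<U>. y \<in> U \<and> x \<notin> U}"
  using assms(2-4)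
proof (induction F rule: finite_ne_induct)
  case (singleton a)
  then show ?case by auto
next
  case (insert a F)
  then obtain y where y: "y \<in> F" "\<forall>x\<in>F. finite {U\<in>\<U>. y \<in> U \<and> x \<notin> U}"
    by auto
  show ?case
  proof (cases "finite {U\<in>\<U>. y \<in> U \<and> a \<notin> U}")
    case True
    then show ?thesis using y by (intro bexI[of _ y]) auto
  next
    case False
    then have a_y: "finite {U\<in>\<U>. a \<in> U \<and> y \<notin> U}"
      using tau_coverD[OF assms(1)] y(1) insert.prems by blast
    have "finite {U\<in>\<U>. a \<in> U \<and> x \<notin> U}" if "x \<in> F" for x
      \<comment> \<open>a member containing a but not x either misses y or contains y but not x\<close>
      using finite_UnI[OF a_y bspec[OF y(2) that]] by (rule finite_subset[rotated]) auto
    then show ?thesis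
      by auto
  qed
qed

lemma tau_cover_imp_omega_cover:
  assumes "tau_cover X \<U>" "X \<noteq> {}"
  shows "omega_cover X \<U>"
proof -
  have cover: "is_cover X \<U>" and large: "\<And>x. x \<in> X \<Longrightarrow> infinite {U\<in>\<U>. x \<in> U}"
    using assms(1) unfolding tau_cover_def large_cover_def by auto
  have contained: "\<exists>U\<in>\<U>. F \<subseteq> U" if F: "finite F" "F \<noteq> {}" "F \<subseteq> X" for F
  proof -
    \<comment> \<open>a \<open>\<subseteq>\<^sup>*\<close>-least point y of F lies in infinitely many members, almost all of which contain F\<close>
    obtain y where y: "y \<in> F" "\<forall>x\<in>F. finite {U\<in>\<U>. y \<in> U \<and> x \<notin> U}"
      using tau_cover_exists_minimal[OF assms(1) F] by blast
    have "finite (\<Union>x\<in>F. {U\<in>\<U>. y \<in> U \<and> x \<notin> U})"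
      using F(1) y(2) by simp
    with large[of y] have "infinite ({U\<in>\<U>. y \<in> U} - (\<Union>x\<in>F. {U\<in>\<U>. y \<in> U \<and> x \<notin> U}))"
      using y(1) F(3) by (simp add: Diff_infinite_finite subset_iff)
    then obtain U where "U \<in> {U\<in>\<U>. y \<in> U} - (\<Union>x\<in>F. {U\<in>\<U>. y \<in> U \<and> x \<notin> U})"
      using infinite_imp_nonempty by blast
    then show ?thesis
      by blast
  qed
  obtain x where "x \<in> X"
    using assms(2) by blast
  have "\<exists>U\<in>\<U>. F \<subseteq> U" if "finite F" "F \<subseteq> X" for F
    using contained[of "insert x F"] that \<open>x \<in> X\<close> by blast
  with cover show ?thesis
    unfolding omega_cover_def by blast
qed

lemma tau_cover_subfamily:
  assumes "tau_cover X \<U>" "\<V> \<subseteq> \<U>" "large_cover X \<V>"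
  shows "tau_cover X \<V>"
proof -
  have "finite {V\<in>\<V>. x \<in> V \<and> y \<notin> V} \<or> finite {V\<in>\<V>. y \<in> V \<and> x \<notin> V}"
    if "x \<in> X" "y \<in> X" for x y
  proof -
    have "{V\<in>\<V>. x \<in> V \<and> y \<notin> V} \<subseteq> {U\<in>\<U>. x \<in> U \<and> y \<notin> U}"
      "{V\<in>\<V>. y \<in> V \<and> x \<notin> V} \<subseteq> {U\<in>\<U>. y \<in> U \<and> x \<notin> U}"
      using assms(2) by blast+
    with tau_coverD[OF assms(1) that] show ?thesis
      by (meson finite_subset)
  qed
  with assms(3) show ?thesis
    unfolding tau_cover_def by blast
qed

section \<open>Split as splitting into two large covers\<close>

definition splits_into_large_covers :: "'a set \<Rightarrow> 'a set set \<Rightarrow> bool" where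
  "splits_into_large_covers X \<U> \<longleftrightarrow> (\<exists>\<V>\<subseteq>\<U>. large_cover X \<V> \<and> large_cover X (\<U> - \<V>))"

lemma Split_iff_splits_into_large_covers:
  assumes covers: "\<And>\<U>. \<U> \<in> \<UU> \<Longrightarrow> is_cover X \<U>"
    and large: "\<And>\<V>. \<V> \<in> \<VV> \<Longrightarrow> large_cover X \<V>"
    and large_subfamilies: "\<And>\<U> \<V>. \<U> \<in> \<UU> \<Longrightarrow> \<V> \<subseteq> \<U> \<Longrightarrow> large_cover X \<V> \<Longrightarrow> \<V> \<in> \<VV>"
  shows "Split \<UU> \<VV> \<longleftrightarrow> (\<forall>\<U>\<in>\<UU>. splits_into_large_covers X \<U>)"
proof (intro iffI ballI)
  fix \<U> assume "Split \<UU> \<VV>" "\<U> \<in> \<UU>"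
  then have "\<exists>\<V>1 \<V>2. \<V>1 \<union> \<V>2 = \<U> \<and> \<V>1 \<inter> \<V>2 = {} \<and>
      (\<exists>\<W>\<subseteq>\<V>1. \<W> \<in> \<VV>) \<and> (\<exists>\<W>\<subseteq>\<V>2. \<W> \<in> \<VV>)"
    unfolding Split_def by (rule bspec)
  then obtain \<V>1 \<V>2 \<W>1 \<W>2 where split: "\<V>1 \<union> \<V>2 = \<U>" "\<V>1 \<inter> \<V>2 = {}"
    "\<W>1 \<subseteq> \<V>1" "\<W>1 \<in> \<VV>" "\<W>2 \<subseteq> \<V>2" "\<W>2 \<in> \<VV>"
    by blast
  have "\<V>1 \<subseteq> \<U>" "\<W>2 \<subseteq> \<U> - \<V>1"
    using split(1,2,5) by auto
  then have "large_cover X \<V>1" "large_cover X (\<U> - \<V>1)"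
    using covers[OF \<open>\<U> \<in> \<UU>\<close>] large split(3,4,6)
    by (auto intro: large_cover_mono)
  then show "splits_into_large_covers X \<U>"
    unfolding splits_into_large_covers_def using split(1) by blast
next
  assume splits: "\<forall>\<U>\<in>\<UU>. splits_into_large_covers X \<U>"
  show "Split \<UU> \<VV>"
    unfolding Split_def
  proof
    fix \<U> assume "\<U> \<in> \<UU>"
    with splits obtain \<V> where "\<V> \<subseteq> \<U>" "large_cover X \<V>" "large_cover X (\<U> - \<V>)"
      unfolding splits_into_large_covers_def by blast
    then have "\<V> \<in> \<VV>" "\<U> - \<V> \<in> \<VV>"
      using large_subfamilies[OF \<open>\<U> \<in> \<UU>\<close>] by auto
    moreover have "\<V> \<union> (\<U> - \<V>) = \<U>" "\<V> \<inter> (\<U> - \<V>) = {}"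
      using \<open>\<V> \<subseteq> \<U>\<close> by auto
    ultimately show "\<exists>\<V>1 \<V>2. \<V>1 \<union> \<V>2 = \<U> \<and> \<V>1 \<inter> \<V>2 = {} \<and>
        (\<exists>\<W>\<subseteq>\<V>1. \<W> \<in> \<VV>) \<and> (\<exists>\<W>\<subseteq>\<V>2. \<W> \<in> \<VV>)"
      by (intro exI[of _ \<V>] exI[of _ "\<U> - \<V>"]) auto
  qed
qed

lemma Split_countable_families_iff:
  assumes "\<And>\<U>. A \<U> \<Longrightarrow> is_cover X \<U>"
    and "\<And>\<V>. B \<V> \<Longrightarrow> large_cover X \<V>"
    and "\<And>\<U> \<V>. A \<U> \<Longrightarrow> \<V> \<subseteq> \<U> \<Longrightarrow> large_cover X \<V> \<Longrightarrow> B \<V>"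
  shows "Split {\<U>. countable \<U> \<and> A \<U> \<and> (\<forall>U\<in>\<U>. P U)} {\<V>. countable \<V> \<and> B \<V> \<and> (\<forall>U\<in>\<V>. P U)} \<longleftrightarrow>
    (\<forall>\<U>. countable \<U> \<longrightarrow> A \<U> \<longrightarrow> (\<forall>U\<in>\<U>. P U) \<longrightarrow> splits_into_large_covers X \<U>)"
    (is "Split ?\<UU> ?\<VV> \<longleftrightarrow> _")
proof -
  have "Split ?\<UU> ?\<VV> \<longleftrightarrow> (\<forall>\<U>\<in>?\<UU>. splits_into_large_covers X \<U>)"
  proof (rule Split_iff_splits_into_large_covers)
    fix \<U> assume "\<U> \<in> ?\<UU>"
    then show "is_cover X \<U>"
      using assms(1) by simp
  next
    fix \<V> assume "\<V> \<in> ?\<VV>"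
    then show "large_cover X \<V>"
      using assms(2) by simp
  next
    fix \<U> \<V> assume "\<U> \<in> ?\<UU>" "\<V> \<subseteq> \<U>" "large_cover X \<V>"
    then show "\<V> \<in> ?\<VV>"
      using countable_subset[OF \<open>\<V> \<subseteq> \<U>\<close>] assms(3) by auto
  qed
  then show ?thesis
    by auto
qed

lemma Split_omega_large_covers_iff:
  "Split {\<U>. countable \<U> \<and> omega_cover X \<U> \<and> (\<forall>U\<in>\<U>. P U)}
      {\<V>. countable \<V> \<and> large_cover X \<V> \<and> (\<forall>U\<in>\<V>. P U)} \<longleftrightarrow>
    (\<forall>\<U>. countable \<U> \<longrightarrow> omega_cover X \<U> \<longrightarrow> (\<forall>U\<in>\<U>. P U) \<longrightarrow> splits_into_large_covers X \<U>)"
proof (rule Split_countable_families_iff)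
  show "is_cover X \<U>" if "omega_cover X \<U>" for \<U>
    using that unfolding omega_cover_def by simp
qed

lemma Split_tau_covers_iff:
  "Split {\<U>. countable \<U> \<and> tau_cover X \<U> \<and> (\<forall>U\<in>\<U>. P U)}
      {\<V>. countable \<V> \<and> tau_cover X \<V> \<and> (\<forall>U\<in>\<V>. P U)} \<longleftrightarrow>
    (\<forall>\<U>. countable \<U> \<longrightarrow> tau_cover X \<U> \<longrightarrow> (\<forall>U\<in>\<U>. P U) \<longrightarrow> splits_into_large_covers X \<U>)"
proof (rule Split_countable_families_iff)
  show "is_cover X \<U>" if "tau_cover X \<U>" for \<U>
    using that unfolding tau_cover_def large_cover_def by simp
  show "large_cover X \<V>" if "tau_cover X \<V>" for \<V>
    using that unfolding tau_cover_def by simp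
qed (rule tau_cover_subfamily)

section \<open>Ultrafilter bases\<close>

lemma almost_subset_infinite:
  assumes "b \<subseteq>\<^sup>* a" "infinite b"
  shows "infinite a"
proof
  assume "finite a"
  with assms(1) have "finite ((b - a) \<union> a)"
    unfolding almost_subset_def by simp
  with assms(2) show False
    using finite_subset[of b "(b - a) \<union> a"] by blast
qed

lemma ultrafilter_baseD:
  assumes "ultrafilter_base B"
  shows ultrafilter_base_Inter_infinite: "\<And>F. finite F \<Longrightarrow> F \<subseteq> B \<Longrightarrow> infinite (\<Inter>F)"
    and ultrafilter_base_decides: "\<And>A. \<exists>b\<in>B. b \<subseteq>\<^sup>* A \<or> b \<subseteq>\<^sup>* - A"
proof -
  obtain \<F> where \<F>: "nonprincipal_ultrafilter \<F>"
    and mem: "\<And>a. a \<in> \<F> \<longleftrightarrow> infinite a \<and> (\<exists>b\<in>B. b \<subseteq>\<^sup>* a)"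
    and B_infinite: "\<And>b. b \<in> B \<Longrightarrow> infinite b"
    using assms unfolding ultrafilter_base_def by auto
  have B_in: "b \<in> \<F>" if "b \<in> B" for b
    using that B_infinite[OF that] unfolding mem almost_subset_def by (intro conjI bexI[of _ b]) auto
  have "\<Inter>F \<in> \<F>" if "finite F" "F \<subseteq> B" for F
    using that
  proof (induction F rule: finite_induct)
    case empty
    then show ?case
      using \<F> unfolding nonprincipal_ultrafilter_def by simp
  next
    case (insert b F)
    with B_in show ?case
      using \<F> unfolding nonprincipal_ultrafilter_def by simp
  qed
  then show "\<And>F. finite F \<Longrightarrow> F \<subseteq> B \<Longrightarrow> infinite (\<Inter>F)"
    using mem by blast
  show "\<And>A. \<exists>b\<in>B. b \<subseteq>\<^sup>* A \<or> b \<subseteq>\<^sup>* - A"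
    using \<F> mem unfolding nonprincipal_ultrafilter_def by metis
qed

lemma ultrafilter_baseI:
  assumes centered: "\<And>F. finite F \<Longrightarrow> F \<subseteq> B \<Longrightarrow> infinite (\<Inter>F)"
    and decides: "\<And>A. \<exists>b\<in>B. b \<subseteq>\<^sup>* A \<or> b \<subseteq>\<^sup>* - A"
  shows "ultrafilter_base B"
proof -
  have B_infinite: "infinite b" if "b \<in> B" for b
    using centered[of "{b}"] that by simp
  define \<F> where "\<F> = {a. infinite a \<and> (\<exists>b\<in>B. b \<subseteq>\<^sup>* a)}"
  have generated: "a \<in> \<F>" if "b \<in> B" "b \<subseteq>\<^sup>* a" for a b
    using that almost_subset_infinite[OF that(2) B_infinite[OF that(1)]] unfolding \<F>_def by blast
  have "nonprincipal_ultrafilter \<F>"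
    unfolding nonprincipal_ultrafilter_def
  proof (intro conjI allI impI)
    show "UNIV \<in> \<F>"
      using decides[of UNIV] generated by (auto simp: almost_subset_def)
    show "{} \<notin> \<F>" "\<And>n. {n} \<notin> \<F>"
      unfolding \<F>_def by auto
  next
    fix a a' assume "a \<in> \<F> \<and> a \<subseteq> a'"
    then obtain b where "b \<in> B" "b \<subseteq>\<^sup>* a" "a \<subseteq> a'"
      unfolding \<F>_def by blast
    moreover have "b - a' \<subseteq> b - a"
      using \<open>a \<subseteq> a'\<close> by blast
    ultimately show "a' \<in> \<F>"
      using generated unfolding almost_subset_def by (meson finite_subset)
  next
    fix a a' assume "a \<in> \<F> \<and> a' \<in> \<F>"
    then obtain b b' where b: "b \<in> B" "b \<subseteq>\<^sup>* a" and b': "b' \<in> B" "b' \<subseteq>\<^sup>* a'"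
      unfolding \<F>_def by blast
    obtain c where c: "c \<in> B" "c \<subseteq>\<^sup>* a \<inter> a' \<or> c \<subseteq>\<^sup>* - (a \<inter> a')"
      using decides by blast
    have "\<Inter>{b, b', c} \<subseteq> (b - a) \<union> (b' - a') \<union> (c - - (a \<inter> a'))"
      by auto
    then have "\<not> c \<subseteq>\<^sup>* - (a \<inter> a')"
      using centered[of "{b, b', c}"] b b' c(1) unfolding almost_subset_def
      by (meson empty_subsetI finite.emptyI finite.insertI finite_UnI finite_subset insert_subset)
    then show "a \<inter> a' \<in> \<F>"
      using c generated by blast
  next
    fix a
    show "a \<in> \<F> \<or> - a \<in> \<F>"
      using decides[of a] generated by blast
  qed
  then show "ultrafilter_base B"
    unfolding ultrafilter_base_def \<F>_def using B_infinite by blast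
qed

lemma ultrafilter_base_Inter_finite:
  assumes "ultrafilter_base B"
  shows "finite (\<Inter>B)"
proof (rule ccontr)
  assume "infinite (\<Inter>B)"
  then obtain J K where JK: "J \<subseteq> \<Inter>B" "K \<subseteq> \<Inter>B" "infinite J" "infinite K" "J \<inter> K = {}"
    by (rule infinite_split)
  obtain b where b: "b \<in> B" "b \<subseteq>\<^sup>* J \<or> b \<subseteq>\<^sup>* - J"
    using ultrafilter_base_decides[OF assms] by blast
  have "K \<subseteq> b - J" "J \<subseteq> b - - J"
    using JK b(1) by auto
  with b(2) JK(3,4) show False
    unfolding almost_subset_def by (meson finite_subset)
qed

section \<open>Covers versus maps into \<open>P(\<nat>)\<close>\<close>

text \<open>Sets equal to X are not allowed in a cover. When f[X] is an ultrafilter base this only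
  discards the finitely many indices in \<open>\<Inter>(f ` X)\<close>, by \<open>ultrafilter_base_Inter_finite\<close>.\<close>

definition preimage_cover :: "'a set \<Rightarrow> ('a \<Rightarrow> nat set) \<Rightarrow> 'a set set" where
  "preimage_cover X f = {{x\<in>X. n \<in> f x} | n. {x\<in>X. n \<in> f x} \<noteq> X}"

lemma countable_preimage_cover: "countable (preimage_cover X f)"
proof -
  have "preimage_cover X f \<subseteq> range (\<lambda>n. {x\<in>X. n \<in> f x})"
    unfolding preimage_cover_def by blast
  then show ?thesis
    by (rule countable_subset) simp
qed

lemma finite_preimage_cover_containing:
  assumes "z \<in> X" "finite {n \<in> f z. Q {x\<in>X. n \<in> f x}}"
  shows "finite {U \<in> preimage_cover X f. z \<in> U \<and> Q U}"
proof -
  have "{U \<in> preimage_cover X f. z \<in> U \<and> Q U} \<subseteq> (\<lambda>n. {x\<in>X. n \<in> f x}) ` {n \<in> f z. Q {x\<in>X. n \<in> f x}}"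
    unfolding preimage_cover_def using assms(1) by auto
  then show ?thesis
    using finite_subset finite_imageI[OF assms(2)] by blast
qed

lemma preimage_cover_omega_cover:
  assumes "ultrafilter_base (f ` X)"
  shows "omega_cover X (preimage_cover X f)"
proof -
  have contained: "\<exists>U\<in>preimage_cover X f. F \<subseteq> U" if F: "finite F" "F \<subseteq> X" for F
  proof -
    have "infinite (\<Inter>(f ` F))"
      using ultrafilter_base_Inter_infinite[OF assms] F by (simp add: image_mono)
    moreover have "finite (\<Inter>(f ` X))"
      by (rule ultrafilter_base_Inter_finite[OF assms])
    ultimately obtain n where n: "n \<in> \<Inter>(f ` F)" "n \<notin> \<Inter>(f ` X)"
      using finite_subset subsetI by metis
    then have "{x\<in>X. n \<in> f x} \<in> preimage_cover X f" "F \<subseteq> {x\<in>X. n \<in> f x}"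
      unfolding preimage_cover_def using F(2) by auto
    then show ?thesis
      by blast
  qed
  have "U \<subseteq> X" "\<not> X \<subseteq> U" if "U \<in> preimage_cover X f" for U
    using that unfolding preimage_cover_def by auto
  moreover have "\<Union>(preimage_cover X f) = X"
  proof (intro equalityI subsetI)
    fix x assume "x \<in> X"
    then show "x \<in> \<Union>(preimage_cover X f)"
      using contained[of "{x}"] by auto
  qed (use calculation in blast)
  ultimately have "is_cover X (preimage_cover X f)"
    unfolding is_cover_def by blast
  with contained show ?thesis
    unfolding omega_cover_def by blast
qed

lemma preimage_cover_not_splits:
  assumes "ultrafilter_base (f ` X)"
  shows "\<not> splits_into_large_covers X (preimage_cover X f)"
proof
  assume "splits_into_large_covers X (preimage_cover X f)"
  then obtain \<V> where \<V>: "\<V> \<subseteq> preimage_cover X f" "large_cover X \<V>"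
    "large_cover X (preimage_cover X f - \<V>)"
    unfolding splits_into_large_covers_def by blast
  define A where "A = {n. {x\<in>X. n \<in> f x} \<in> \<V>}"
  obtain z where z: "z \<in> X" "f z \<subseteq>\<^sup>* A \<or> f z \<subseteq>\<^sup>* - A"
    using ultrafilter_base_decides[OF assms] by blast
  from z(2) show False
  proof
    assume "f z \<subseteq>\<^sup>* A"
    then have "finite {U \<in> preimage_cover X f. z \<in> U \<and> U \<notin> \<V>}"
      by (intro finite_preimage_cover_containing[OF z(1)])
        (simp add: A_def almost_subset_def set_diff_eq)
    moreover have "{U \<in> preimage_cover X f. z \<in> U \<and> U \<notin> \<V>} = {U \<in> preimage_cover X f - \<V>. z \<in> U}"
      by blast
    ultimately show False
      using large_coverD[OF \<V>(3) z(1)] by simp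
  next
    assume "f z \<subseteq>\<^sup>* - A"
    then have "finite {U \<in> preimage_cover X f. z \<in> U \<and> U \<in> \<V>}"
      by (intro finite_preimage_cover_containing[OF z(1)])
        (simp add: A_def almost_subset_def set_diff_eq)
    moreover have "{U \<in> preimage_cover X f. z \<in> U \<and> U \<in> \<V>} = {U \<in> \<V>. z \<in> U}"
      using \<V>(1) by blast
    ultimately show False
      using large_coverD[OF \<V>(2) z(1)] by simp
  qed
qed

lemma preimage_cover_tau_cover:
  assumes "simple_P_point_base (f ` X)"
  shows "tau_cover X (preimage_cover X f)"
proof -
  have base: "ultrafilter_base (f ` X)"
    and linear: "\<And>x y. x \<in> X \<Longrightarrow> y \<in> X \<Longrightarrow> f x \<subseteq>\<^sup>* f y \<or> f y \<subseteq>\<^sup>* f x"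
    using assms unfolding simple_P_point_base_def by auto
  have omega: "omega_cover X (preimage_cover X f)"
    by (rule preimage_cover_omega_cover[OF base])
  have "large_cover X (preimage_cover X f)"
  proof (rule large_cover_subfamily[OF _ order_refl])
    show "is_cover X (preimage_cover X f)"
      using omega unfolding omega_cover_def by blast
    fix x assume "x \<in> X"
    then show "infinite {U \<in> preimage_cover X f. x \<in> U}"
      using omega_cover_infinite[OF omega, of "{x}"] by simp
  qed
  moreover have "finite {U \<in> preimage_cover X f. x \<in> U \<and> y \<notin> U}"
    if "x \<in> X" "y \<in> X" "f x \<subseteq>\<^sup>* f y" for x y
    using that by (intro finite_preimage_cover_containing) (simp_all add: almost_subset_def set_diff_eq)
  ultimately show ?thesis
    unfolding tau_cover_def using linear by blast
qed

definition indices_containing :: "(nat \<Rightarrow> 'a set) \<Rightarrow> 'a \<Rightarrow> nat set" where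
  "indices_containing e x = {n. x \<in> e n}"

lemma bij_betw_finite_Collect_iff:
  assumes "bij_betw e UNIV \<U>"
  shows "finite {n. P (e n)} \<longleftrightarrow> finite {U\<in>\<U>. P U}"
proof -
  have "{U\<in>\<U>. P U} = e ` {n. P (e n)}"
    using assms unfolding bij_betw_def by auto
  moreover have "inj_on e {n. P (e n)}"
    using bij_betw_imp_inj_on[OF assms] by (rule inj_on_subset) simp
  ultimately show ?thesis
    by (simp add: finite_image_iff)
qed

lemma omega_cover_enumeration:
  assumes "countable \<U>" "omega_cover X \<U>" "\<forall>U\<in>\<U>. P U"
  obtains e where "bij_betw e UNIV \<U>" "\<forall>x\<in>X. infinite (indices_containing e x)"
    "\<forall>n. P {x\<in>X. n \<in> indices_containing e x}"
proof -
  define e where "e = from_nat_into \<U>"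
  have "infinite \<U>"
    using omega_cover_infinite[OF assms(2), of "{}"] by simp
  then have bij: "bij_betw e UNIV \<U>"
    unfolding e_def using bij_betw_from_nat_into[OF assms(1)] by blast
  then have member: "e n \<in> \<U>" for n
    using bij_betwE by blast
  have "infinite (indices_containing e x)" if "x \<in> X" for x
    using omega_cover_infinite[OF assms(2), of "{x}"] bij_betw_finite_Collect_iff[OF bij, of "\<lambda>U. x \<in> U"] that
    unfolding indices_containing_def by simp
  moreover have "{x\<in>X. n \<in> indices_containing e x} = e n" for n
    using is_cover_memberD(1)[OF _ member] assms(2) unfolding omega_cover_def indices_containing_def by auto
  ultimately show ?thesis
    using that bij assms(3) member by simp
qed

lemma splits_into_large_covers_if_meets_both:
  assumes "bij_betw e UNIV \<U>" "is_cover X \<U>"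
    and meets: "\<And>x. x \<in> X \<Longrightarrow> infinite {n. x \<in> e n \<and> n \<in> A}"
      "\<And>x. x \<in> X \<Longrightarrow> infinite {n. x \<in> e n \<and> n \<notin> A}"
  shows "splits_into_large_covers X \<U>"
proof -
  have inj: "inj e" and range: "range e = \<U>"
    using assms(1) unfolding bij_betw_def by auto
  have "large_cover X (e ` A)"
  proof (rule large_cover_subfamily[OF assms(2)])
    show "e ` A \<subseteq> \<U>"
      using range by blast
    fix x assume "x \<in> X"
    have "{U\<in>e ` A. x \<in> U} = e ` {n. x \<in> e n \<and> n \<in> A}"
      by blast
    then show "infinite {U\<in>e ` A. x \<in> U}"
      using meets(1)[OF \<open>x \<in> X\<close>] inj by (simp add: finite_image_iff inj_on_subset)
  qed
  moreover have "large_cover X (\<U> - e ` A)"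
  proof (rule large_cover_subfamily[OF assms(2)])
    fix x assume "x \<in> X"
    have "{U\<in>\<U> - e ` A. x \<in> U} = e ` {n. x \<in> e n \<and> n \<notin> A}"
      using inj range by (auto simp: inj_image_mem_iff inj_eq)
    then show "infinite {U\<in>\<U> - e ` A. x \<in> U}"
      using meets(2)[OF \<open>x \<in> X\<close>] inj by (simp add: finite_image_iff inj_on_subset)
  qed blast
  moreover have "e ` A \<subseteq> \<U>"
    using range by blast
  ultimately show ?thesis
    unfolding splits_into_large_covers_def by blast
qed

lemma ultrafilter_base_indices_containing:
  assumes "bij_betw e UNIV \<U>" "omega_cover X \<U>" "\<not> splits_into_large_covers X \<U>"
  shows "ultrafilter_base (indices_containing e ` X)"
proof (rule ultrafilter_baseI)
  fix F assume "finite F" "F \<subseteq> indices_containing e ` X"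
  then obtain G where G: "G \<subseteq> X" "finite G" "F = indices_containing e ` G"
    by (meson finite_subset_image)
  then have "\<Inter>F = {n. G \<subseteq> e n}"
    unfolding indices_containing_def by auto
  then show "infinite (\<Inter>F)"
    using omega_cover_infinite[OF assms(2) G(2,1)] bij_betw_finite_Collect_iff[OF assms(1)] by simp
next
  fix A
  show "\<exists>b\<in>indices_containing e ` X. b \<subseteq>\<^sup>* A \<or> b \<subseteq>\<^sup>* - A"
  proof (rule ccontr)
    assume "\<not> ?thesis"
    then have "infinite {n. x \<in> e n \<and> n \<in> A}" "infinite {n. x \<in> e n \<and> n \<notin> A}" if "x \<in> X" for x
      using that unfolding indices_containing_def almost_subset_def by (auto simp: set_diff_eq)
    moreover have "is_cover X \<U>"
      using assms(2) unfolding omega_cover_def by blast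
    ultimately show False
      using splits_into_large_covers_if_meets_both[OF assms(1)] assms(3) by blast
  qed
qed

lemma simple_P_point_base_indices_containing:
  assumes "bij_betw e UNIV \<U>" "tau_cover X \<U>" "X \<noteq> {}" "\<not> splits_into_large_covers X \<U>"
  shows "simple_P_point_base (indices_containing e ` X)"
  unfolding simple_P_point_base_def
proof (intro conjI ballI)
  show "ultrafilter_base (indices_containing e ` X)"
    using ultrafilter_base_indices_containing[OF assms(1) tau_cover_imp_omega_cover[OF assms(2,3)] assms(4)] .
  fix a b assume "a \<in> indices_containing e ` X" "b \<in> indices_containing e ` X"
  then obtain x y where xy: "x \<in> X" "y \<in> X" "a = {n. x \<in> e n}" "b = {n. y \<in> e n}"
    unfolding indices_containing_def by blast
  show "a \<subseteq>\<^sup>* b \<or> b \<subseteq>\<^sup>* a"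
    using tau_coverD[OF assms(2) xy(1,2)]
      bij_betw_finite_Collect_iff[OF assms(1), of "\<lambda>U. x \<in> U \<and> y \<notin> U"]
      bij_betw_finite_Collect_iff[OF assms(1), of "\<lambda>U. y \<in> U \<and> x \<notin> U"]
    unfolding almost_subset_def xy(3,4) by (simp add: set_diff_eq)
qed

lemma splits_omega_covers_iff_no_ultrafilter_base:
  "(\<forall>\<U>. countable \<U> \<longrightarrow> omega_cover X \<U> \<longrightarrow> (\<forall>U\<in>\<U>. P U) \<longrightarrow> splits_into_large_covers X \<U>) \<longleftrightarrow>
   (\<forall>f. (\<forall>x\<in>X. infinite (f x)) \<and> (\<forall>n. P {x\<in>X. n \<in> f x}) \<longrightarrow> \<not> ultrafilter_base (f ` X))"
proof (intro iffI allI impI notI)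
  fix f assume splits: "\<forall>\<U>. countable \<U> \<longrightarrow> omega_cover X \<U> \<longrightarrow> (\<forall>U\<in>\<U>. P U) \<longrightarrow> splits_into_large_covers X \<U>"
    and f: "(\<forall>x\<in>X. infinite (f x)) \<and> (\<forall>n. P {x\<in>X. n \<in> f x})" and base: "ultrafilter_base (f ` X)"
  have "\<forall>U\<in>preimage_cover X f. P U"
    using f unfolding preimage_cover_def by auto
  then have "splits_into_large_covers X (preimage_cover X f)"
    using splits countable_preimage_cover preimage_cover_omega_cover[OF base] by blast
  with preimage_cover_not_splits[OF base] show False ..
next
  fix \<U> assume no_base: "\<forall>f. (\<forall>x\<in>X. infinite (f x)) \<and> (\<forall>n. P {x\<in>X. n \<in> f x}) \<longrightarrow> \<not> ultrafilter_base (f ` X)"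
    and \<U>: "countable \<U>" "omega_cover X \<U>" "\<forall>U\<in>\<U>. P U"
  obtain e where e: "bij_betw e UNIV \<U>" "\<forall>x\<in>X. infinite (indices_containing e x)"
    "\<forall>n. P {x\<in>X. n \<in> indices_containing e x}"
    by (rule omega_cover_enumeration[OF \<U>])
  show "splits_into_large_covers X \<U>"
    using ultrafilter_base_indices_containing[OF e(1) \<U>(2)] no_base e(2,3) by blast
qed

lemma splits_tau_covers_iff_no_simple_P_point_base:
  assumes "X \<noteq> {}"
  shows "(\<forall>\<U>. countable \<U> \<longrightarrow> tau_cover X \<U> \<longrightarrow> (\<forall>U\<in>\<U>. P U) \<longrightarrow> splits_into_large_covers X \<U>) \<longleftrightarrow>
   (\<forall>f. (\<forall>x\<in>X. infinite (f x)) \<and> (\<forall>n. P {x\<in>X. n \<in> f x}) \<longrightarrow> \<not> simple_P_point_base (f ` X))"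
proof (intro iffI allI impI notI)
  fix f assume splits: "\<forall>\<U>. countable \<U> \<longrightarrow> tau_cover X \<U> \<longrightarrow> (\<forall>U\<in>\<U>. P U) \<longrightarrow> splits_into_large_covers X \<U>"
    and f: "(\<forall>x\<in>X. infinite (f x)) \<and> (\<forall>n. P {x\<in>X. n \<in> f x})" and base: "simple_P_point_base (f ` X)"
  have "\<forall>U\<in>preimage_cover X f. P U"
    using f unfolding preimage_cover_def by auto
  then have "splits_into_large_covers X (preimage_cover X f)"
    using splits countable_preimage_cover preimage_cover_tau_cover[OF base] by blast
  moreover have "ultrafilter_base (f ` X)"
    using base unfolding simple_P_point_base_def by blast
  ultimately show False
    using preimage_cover_not_splits by blast
next
  fix \<U> assume no_base: "\<forall>f. (\<forall>x\<in>X. infinite (f x)) \<and> (\<forall>n. P {x\<in>X. n \<in> f x}) \<longrightarrow> \<not> simple_P_point_base (f ` X)"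
    and \<U>: "countable \<U>" "tau_cover X \<U>" "\<forall>U\<in>\<U>. P U"
  obtain e where e: "bij_betw e UNIV \<U>" "\<forall>x\<in>X. infinite (indices_containing e x)"
    "\<forall>n. P {x\<in>X. n \<in> indices_containing e x}"
    by (rule omega_cover_enumeration[OF \<U>(1) tau_cover_imp_omega_cover[OF \<U>(2) assms] \<U>(3)])
  show "splits_into_large_covers X \<U>"
    using simple_P_point_base_indices_containing[OF e(1) \<U>(2) assms] no_base e(2,3) by blast
qed

section \<open>Continuous and Borel maps into the Cantor space\<close>

lemma continuous_map_discrete_iff_clopen_in:
  fixes p :: "real \<Rightarrow> bool"
  shows "continuous_map (top_of_set X) (discrete_topology UNIV) p \<longleftrightarrow> clopen_in X {x\<in>X. p x}"
proof
  assume continuous: "continuous_map (top_of_set X) (discrete_topology UNIV) p"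
  have "openin (top_of_set X) {x \<in> topspace (top_of_set X). p x \<in> {True}}"
    by (rule openin_continuous_map_preimage[OF continuous]) simp
  moreover have "closedin (top_of_set X) {x \<in> topspace (top_of_set X). p x \<in> {True}}"
    by (rule closedin_continuous_map_preimage[OF continuous]) simp
  ultimately show "clopen_in X {x\<in>X. p x}"
    unfolding clopen_in_def by simp
next
  assume "clopen_in X {x\<in>X. p x}"
  then have "openin (top_of_set X) {x\<in>X. p x}" "openin (top_of_set X) (X - {x\<in>X. p x})"
    unfolding clopen_in_def closedin_def by simp_all
  moreover have "X - {x\<in>X. p x} = {x\<in>X. \<not> p x}"
    by blast
  ultimately have open_true: "openin (top_of_set X) {x\<in>X. p x}"
    and open_false: "openin (top_of_set X) {x\<in>X. \<not> p x}"
    by simp_all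
  have "openin (top_of_set X) {x\<in>X. p x \<in> S}" for S
  proof -
    have "p x \<in> S \<longleftrightarrow> (p x \<and> True \<in> S) \<or> (\<not> p x \<and> False \<in> S)" for x
      by (cases "p x") auto
    then have "{x\<in>X. p x \<in> S} =
        (if True \<in> S then {x\<in>X. p x} else {}) \<union> (if False \<in> S then {x\<in>X. \<not> p x} else {})"
      by auto
    then show ?thesis
      using open_true open_false by (auto intro: openin_Un)
  qed
  then show "continuous_map (top_of_set X) (discrete_topology UNIV) p"
    unfolding continuous_map_def by simp
qed

lemma continuous_to_inf_iff:
  "continuous_to_inf X f \<longleftrightarrow> (\<forall>x\<in>X. infinite (f x)) \<and> (\<forall>n. clopen_in X {x\<in>X. n \<in> f x})"
  unfolding continuous_to_inf_def continuous_map_componentwise_UNIV continuous_map_discrete_iff_clopen_in ..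

lemma measurable_count_space_iff_borel_in:
  fixes p :: "real \<Rightarrow> bool"
  shows "p \<in> measurable (restrict_space borel X) (count_space UNIV) \<longleftrightarrow> borel_in X {x\<in>X. p x}"
proof -
  have space: "space (restrict_space borel X) = X"
    by (simp add: space_restrict_space)
  have "X \<in> sets (restrict_space borel X)"
    using sets.top[of "restrict_space borel X"] space by simp
  then have complement: "X - S \<in> sets (restrict_space borel X)" if "S \<in> sets (restrict_space borel X)" for S
    using that by (rule sets.Diff)
  have "X - {x\<in>X. p x} = {x\<in>X. \<not> p x}" "X - {x\<in>X. \<not> p x} = {x\<in>X. p x}"
    by auto
  then have negation: "{x\<in>X. \<not> p x} \<in> sets (restrict_space borel X) \<longleftrightarrow> {x\<in>X. p x} \<in> sets (restrict_space borel X)"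
    using complement[of "{x\<in>X. p x}"] complement[of "{x\<in>X. \<not> p x}"] by metis
  have preimage: "p -` {b} \<inter> X = {x\<in>X. p x = b}" for b
    by auto
  have "p \<in> measurable (restrict_space borel X) (count_space UNIV) \<longleftrightarrow>
      (\<forall>b. {x\<in>X. p x = b} \<in> sets (restrict_space borel X))"
    unfolding measurable_count_space_eq2_countable space preimage by simp
  also have "\<dots> \<longleftrightarrow> {x\<in>X. p x} \<in> sets (restrict_space borel X)"
    unfolding all_bool_eq using negation by simp
  finally show ?thesis
    unfolding borel_in_def .
qed

lemma measurable_PiM_count_space_iff:
  "g \<in> measurable M (Pi\<^sub>M UNIV (\<lambda>_. count_space UNIV)) \<longleftrightarrow>
    (\<forall>i. (\<lambda>x. g x i) \<in> measurable M (count_space UNIV))"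
proof
  assume "g \<in> measurable M (Pi\<^sub>M UNIV (\<lambda>_. count_space UNIV))"
  then show "\<forall>i. (\<lambda>x. g x i) \<in> measurable M (count_space UNIV)"
    by simp
next
  assume "\<forall>i. (\<lambda>x. g x i) \<in> measurable M (count_space UNIV)"
  then have "(\<lambda>x i. g x i) \<in> measurable M (Pi\<^sub>M UNIV (\<lambda>_. count_space UNIV))"
    by (intro measurable_PiM_single') (auto simp: space_PiM)
  then show "g \<in> measurable M (Pi\<^sub>M UNIV (\<lambda>_. count_space UNIV))"
    by simp
qed

lemma borel_to_inf_iff:
  "borel_to_inf X f \<longleftrightarrow> (\<forall>x\<in>X. infinite (f x)) \<and> (\<forall>n. borel_in X {x\<in>X. n \<in> f x})"
  unfolding borel_to_inf_def measurable_PiM_count_space_iff measurable_count_space_iff_borel_in ..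

theorem theorem3p5:
  fixes X :: "real set"
  assumes "infinite X"
  shows "(Split (C_Omega X) (C_Lambda X) \<longleftrightarrow>
            (\<forall>f. continuous_to_inf X f \<longrightarrow> \<not> ultrafilter_base (f ` X)))
       \<and> (Split (B_Omega X) (B_Lambda X) \<longleftrightarrow>
            (\<forall>f. borel_to_inf X f \<longrightarrow> \<not> ultrafilter_base (f ` X)))
       \<and> (Split (C_Tau X) (C_Tau X) \<longleftrightarrow>
            (\<forall>f. continuous_to_inf X f \<longrightarrow> \<not> simple_P_point_base (f ` X)))
       \<and> (Split (B_Tau X) (B_Tau X) \<longleftrightarrow>
            (\<forall>f. borel_to_inf X f \<longrightarrow> \<not> simple_P_point_base (f ` X)))"
proof -
  have "X \<noteq> {}"
    using assms by auto
  show ?thesis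
    unfolding C_Omega_def C_Lambda_def B_Omega_def B_Lambda_def C_Tau_def B_Tau_def
      Split_omega_large_covers_iff Split_tau_covers_iff continuous_to_inf_iff borel_to_inf_iff
      splits_omega_covers_iff_no_ultrafilter_base
      splits_tau_covers_iff_no_simple_P_point_base[OF \<open>X \<noteq> {}\<close>]
    by blast
qed

end
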